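(* Let $\Gamma=(\mathcal{A},\mathcal{R})$ be a finite argumentation framework with $|\mathcal{A}|=k$ and indexing $\phi$, and let $\Pi_\Gamma$ be a CNF formula over $\mathrm{VARS}(\Gamma)$ whose satisfying assignments are exactly those assignments for which setting $\mathcal{L}ab(\phi(i))=\mathtt{in}/\mathtt{out}/\mathtt{undec}$ according as $I_i/O_i/U_i$ is true yields a well-defined complete labelling of $\Gamma$ with at least one argument labelled $\mathtt{in}$. Let $SS$ be any procedure which, given a CNF formula, returns some satisfying assignment if one exists and the symbol $\varepsilon$ otherwise (the choice among satisfying assignments being arbitrary). For an assignment $\nu$ let $\mathrm{INARGS}(\nu)=\{\phi(i): I_i \text{ true in }\nu\}$. Consider the following procedure PrefSat: Set $E_p:=\emptyset$ and $cnf:=\Pi_\Gamma$. Outer loop: set $cnfdf:=cnf$ and $prefcand:=$ undefined. Inner loop: let $\nu:=SS(cnfdf)$; if $\nu\ne\varepsilon$, set $prefcand:=\nu$, $S:=\mathrm{INARGS}(\nu)$, and replace $cnfdf$ by $cnfdf\wedge\bigwedge_{a\in S}I_{\phi^{-1}(a)}\wedge\big(\bigvee_{a\in\mathcal{A}\setminus S}I_{\phi^{-1}(a)}\big)$ (an empty disjunction being false); repeat the inner loop as long as $\nu\neq\varepsilon$ and $\mathrm{INARGS}(\nu)\neq\mathcal{A}$. After the inner loop, if $prefcand$ is defined, set $E_p:=E_p\cup\{\mathrm{INARGS}(prefcand)\}$ and replace $cnf$ by $cnf\wedge\bigvee_{a\in\mathcal{A}\setminus\mathrm{INARGS}(prefcand)}I_{\phi^{-1}(a)}$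 (an empty disjunction being false); repeat the outer loop as long as $prefcand$ is defined. Finally, if $E_p=\emptyset$ set $E_p:=\{\emptyset\}$, and return $E_p$. Then, for every choice of outputs of $SS$, PrefSat terminates and returns exactly the set of preferred extensions of $\Gamma$.
   Context: An argumentation framework is a pair $(\mathcal{A},\mathcal{R})$ with $\mathcal{A}$ a finite set and $\mathcal{R}\subseteq\mathcal{A}\times\mathcal{A}$; $b$ attacks $a$ iff $(b,a)\in\mathcal{R}$, and $a^-=\{b:(b,a)\in\mathcal{R}\}$. A set $S\subseteq\mathcal{A}$ is conflict-free if no $a,b\in S$ with $b$ attacking $a$; $a$ is acceptable w.r.t. $S$ if every attacker of $a$ is attacked by some element of $S$; $S$ is admissible if conflict-free and every element of $S$ is acceptable w.r.t. $S$; $S$ is a preferred extension if it is a maximal (w.r.t. set inclusion) admissible set. A total function $\mathcal{L}ab:\mathcal{A}\to\{\mathtt{in},\mathtt{out},\mathtt{undec}\}$ is a complete labelling iff for every $a$: $\mathcal{L}ab(a)=\mathtt{in}\Leftrightarrow\forall b\in a^-\ \mathcal{L}ab(b)=\mathtt{out}$; $\mathcal{L}ab(a)=\mathtt{out}\Leftrightarrow\exists b\in a^-\ \mathcal{L}ab(b)=\mathtt{in}$; $\mathcal{L}ab(a)=\mathtt{undec}\Leftrightarrow(\forall b\in a^-\ \mathcal{L}ab(b)\ne\mathtt{in}\wedge\exists c\in a^-\ \mathcal{L}ab(c)=\mathtt{undec})$. An indexing is a bijection $\phi:\{1,\dots,k\}\to\mathcal{A}$, and $\mathrm{VARS}(\Gamma)=\bigcup_{i=1}^k\{I_i,O_i,U_i\}$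 are boolean variables. *)

theory Defs
  imports Main
begin

definition attackers :: "('a \<times> 'a) set \<Rightarrow> 'a \<Rightarrow> 'a set" where
  "attackers R a = {b. (b, a) \<in> R}"

definition conflict_free :: "('a \<times> 'a) set \<Rightarrow> 'a set \<Rightarrow> bool" where
  "conflict_free R S \<longleftrightarrow> (\<forall>a\<in>S. \<forall>b\<in>S. (b, a) \<notin> R)"

definition acceptable :: "('a \<times> 'a) set \<Rightarrow> 'a \<Rightarrow> 'a set \<Rightarrow> bool" where
  "acceptable R a S \<longleftrightarrow> (\<forall>b\<in>attackers R a. \<exists>c\<in>S. (c, b) \<in> R)"

definition admissible :: "'a set \<Rightarrow> ('a \<times> 'a) set \<Rightarrow> 'a set \<Rightarrow> bool" where
  "admissible A R S \<longleftrightarrow> S \<subseteq> A \<and> conflict_free R S \<and> (\<forall>a\<in>S. acceptable R a S)"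

definition preferred :: "'a set \<Rightarrow> ('a \<times> 'a) set \<Rightarrow> 'a set \<Rightarrow> bool" where
  "preferred A R S \<longleftrightarrow> admissible A R S \<and>
     (\<forall>T. admissible A R T \<and> S \<subseteq> T \<longrightarrow> T = S)"

datatype label = lab_in | lab_out | lab_undec

definition complete_labelling :: "'a set \<Rightarrow> ('a \<times> 'a) set \<Rightarrow> ('a \<Rightarrow> label) \<Rightarrow> bool" where
  "complete_labelling A R Lab \<longleftrightarrow> (\<forall>a\<in>A.
     (Lab a = lab_in \<longleftrightarrow> (\<forall>b\<in>attackers R a. Lab b = lab_out)) \<and>
     (Lab a = lab_out \<longleftrightarrow> (\<exists>b\<in>attackers R a. Lab b = lab_in)) \<and>
     (Lab a = lab_undec \<longleftrightarrow> ((\<forall>b\<in>attackers R a. Lab b \<noteq> lab_in) \<and>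
                               (\<exists>c\<in>attackers R a. Lab c = lab_undec))))"

datatype var = VI nat | VO nat | VU nat

datatype lit = Pos var | Neg var

type_synonym clause = "lit set"
type_synonym cnf = "clause set"
type_synonym assignment = "var \<Rightarrow> bool"

fun lit_true :: "assignment \<Rightarrow> lit \<Rightarrow> bool" where
  "lit_true \<nu> (Pos v) = \<nu> v"
| "lit_true \<nu> (Neg v) = (\<not> \<nu> v)"

fun lit_var :: "lit \<Rightarrow> var" where
  "lit_var (Pos v) = v"
| "lit_var (Neg v) = v"

definition sat :: "assignment \<Rightarrow> cnf \<Rightarrow> bool" where
  "sat \<nu> f \<longleftrightarrow> (\<forall>C\<in>f. \<exists>l\<in>C. lit_true \<nu> l)"

definition is_cnf_over :: "var set \<Rightarrow> cnf \<Rightarrow> bool" where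
  "is_cnf_over V f \<longleftrightarrow> finite f \<and> (\<forall>C\<in>f. finite C \<and> (\<forall>l\<in>C. lit_var l \<in> V))"

definition VARS :: "nat \<Rightarrow> var set" where
  "VARS k = (\<Union>i\<in>{1..k}. {VI i, VO i, VU i})"

text \<open>Admissible outputs of the SAT solver SS on formula f (None plays the role of epsilon).\<close>
definition SS_output :: "cnf \<Rightarrow> assignment option \<Rightarrow> bool" where
  "SS_output f r \<longleftrightarrow> (r = None \<longleftrightarrow> \<not> (\<exists>\<nu>. sat \<nu> f)) \<and> (\<forall>\<nu>. r = Some \<nu> \<longrightarrow> sat \<nu> f)"

definition idx :: "(nat \<Rightarrow> 'a) \<Rightarrow> nat \<Rightarrow> 'a \<Rightarrow> nat" where
  "idx \<phi> k a = inv_into {1..k} \<phi> a"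

definition lab_of :: "assignment \<Rightarrow> nat \<Rightarrow> label" where
  "lab_of \<nu> i = (if \<nu> (VI i) then lab_in else if \<nu> (VO i) then lab_out else lab_undec)"

definition encodes_complete_nonempty ::
  "'a set \<Rightarrow> ('a \<times> 'a) set \<Rightarrow> (nat \<Rightarrow> 'a) \<Rightarrow> nat \<Rightarrow> assignment \<Rightarrow> bool" where
  "encodes_complete_nonempty A R \<phi> k \<nu> \<longleftrightarrow>
     (\<forall>i\<in>{1..k}. (\<nu> (VI i) \<and> \<not> \<nu> (VO i) \<and> \<not> \<nu> (VU i)) \<or>
                 (\<not> \<nu> (VI i) \<and> \<nu> (VO i) \<and> \<not> \<nu> (VU i)) \<or>
                 (\<not> \<nu> (VI i) \<and> \<not> \<nu> (VO i) \<and> \<nu> (VU i))) \<and>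
     complete_labelling A R (\<lambda>a. lab_of \<nu> (idx \<phi> k a)) \<and>
     (\<exists>a\<in>A. lab_of \<nu> (idx \<phi> k a) = lab_in)"

definition INARGS :: "(nat \<Rightarrow> 'a) \<Rightarrow> nat \<Rightarrow> assignment \<Rightarrow> 'a set" where
  "INARGS \<phi> k \<nu> = {\<phi> i | i. i \<in> {1..k} \<and> \<nu> (VI i)}"

text \<open>Outer cnf Ep: start of an outer iteration.
  Inner cnf Ep cnfdf prefcand: start of an inner iteration (about to call SS).
  After cnf Ep prefcand: inner loop just ended.
  Done E: returned E.\<close>
datatype 'a pstate =
    Outer cnf "'a set set"
  | Inner cnf "'a set set" cnf "assignment option"
  | After cnf "'a set set" "assignment option"
  | Done "'a set set"

definition inner_add :: "'a set \<Rightarrow> (nat \<Rightarrow> 'a) \<Rightarrow> nat \<Rightarrow> 'a set \<Rightarrow> cnf" where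
  "inner_add A \<phi> k S = {{Pos (VI (idx \<phi> k a))} | a. a \<in> S} \<union> {{Pos (VI (idx \<phi> k a)) | a. a \<in> A - S}}"

definition outer_add :: "'a set \<Rightarrow> (nat \<Rightarrow> 'a) \<Rightarrow> nat \<Rightarrow> 'a set \<Rightarrow> cnf" where
  "outer_add A \<phi> k S = {{Pos (VI (idx \<phi> k a)) | a. a \<in> A - S}}"

inductive pref_step :: "'a set \<Rightarrow> (nat \<Rightarrow> 'a) \<Rightarrow> nat \<Rightarrow> 'a pstate \<Rightarrow> 'a pstate \<Rightarrow> bool"
  for A \<phi> k where
  outer: "pref_step A \<phi> k (Outer cnf Ep) (Inner cnf Ep cnf None)"
| call_cont: "SS_output cnfdf (Some \<nu>) \<Longrightarrow> INARGS \<phi> k \<nu> \<noteq> A \<Longrightarrow>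
     pref_step A \<phi> k (Inner cnf Ep cnfdf pc)
       (Inner cnf Ep (cnfdf \<union> inner_add A \<phi> k (INARGS \<phi> k \<nu>)) (Some \<nu>))"
| call_all: "SS_output cnfdf (Some \<nu>) \<Longrightarrow> INARGS \<phi> k \<nu> = A \<Longrightarrow>
     pref_step A \<phi> k (Inner cnf Ep cnfdf pc) (After cnf Ep (Some \<nu>))"
| call_eps: "SS_output cnfdf None \<Longrightarrow>
     pref_step A \<phi> k (Inner cnf Ep cnfdf pc) (After cnf Ep pc)"
| after_some: "pref_step A \<phi> k (After cnf Ep (Some p))
     (Outer (cnf \<union> outer_add A \<phi> k (INARGS \<phi> k p)) (Ep \<union> {INARGS \<phi> k p}))"
| after_none: "pref_step A \<phi> k (After cnf Ep None) (Done (if Ep = {} then {{}} else Ep))"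

end

theory Submission
  imports Defs
begin

text \<open>The in-sets of the models of \<open>\<Pi>\<close> (the candidates) are admissible, and every nonempty
  preferred extension is one of them (via its complete labelling); hence the preferred extensions
  are the maximal candidates, or just the empty set if there is no candidate. In an outer iteration
  the inner loop climbs strictly upwards through the models of cnf, so the last model it finds has a
  maximal in-set among them; as cnf excludes precisely the candidates below those found so far,
  this in-set is a new maximal candidate. Once cnf is unsatisfiable all maximal candidates have
  been found. Termination follows lexicographically from the number of maximal candidates not yet
  found and the size of the current inner candidate.\<close>

section \<open>Admissible sets, preferred extensions and complete labellings\<close>

lemma admissible_empty: "admissible A R {}"
  by (simp add: admissible_def conflict_free_def)

lemma acceptable_mono: "acceptable R a S \<Longrightarrow> S \<subseteq> T \<Longrightarrow> acceptable R a T"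
  unfolding acceptable_def by blast

lemma admissible_insert_acceptable:
  assumes adm: "admissible A R S" and "a \<in> A" and acc: "acceptable R a S"
  shows "admissible A R (insert a S)"
proof -
  have cf: "conflict_free R S" and acc_S: "\<forall>x\<in>S. acceptable R x S"
    using adm unfolding admissible_def by auto
  have not_attacked: "(b, a) \<notin> R" if "b \<in> S" for b
    using acc cf that unfolding acceptable_def attackers_def conflict_free_def by blast
  have not_attacking: "(a, b) \<notin> R" if "b \<in> S" for b
    using acc_S not_attacked that unfolding acceptable_def attackers_def by blast
  have "(a, a) \<notin> R"
    using acc not_attacked unfolding acceptable_def attackers_def by blast
  then have "conflict_free R (insert a S)"
    using cf not_attacked not_attacking unfolding conflict_free_def by blast
  moreover have "\<forall>x\<in>insert a S. acceptable R x (insert a S)"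
    using acc_S acc acceptable_mono[of R _ S "insert a S"] by blast
  ultimately show ?thesis
    using adm \<open>a \<in> A\<close> unfolding admissible_def by blast
qed

lemma preferred_acceptable_mem:
  assumes "preferred A R P" and "a \<in> A" and "acceptable R a P"
  shows "a \<in> P"
  using assms admissible_insert_acceptable[of A R P a] unfolding preferred_def by blast

lemma admissible_subset_preferred:
  assumes "finite A" and "admissible A R T"
  shows "\<exists>P. preferred A R P \<and> T \<subseteq> P"
proof -
  let ?F = "{U. admissible A R U \<and> T \<subseteq> U}"
  have "?F \<subseteq> Pow A"
    unfolding admissible_def by blast
  then have "finite ?F"
    using \<open>finite A\<close> by (meson finite_Pow_iff finite_subset)
  then obtain P where "P \<in> ?F" and "\<forall>U\<in>?F. P \<subseteq> U \<longrightarrow> P = U"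
    using finite_has_maximal2[of ?F T] assms(2) by blast
  then show ?thesis
    unfolding preferred_def by blast
qed

lemma label_undec_iff: "x = lab_undec \<longleftrightarrow> x \<noteq> lab_in \<and> x \<noteq> lab_out"
  by (cases x) auto

lemma complete_labelling_iff_in_out:
  "complete_labelling A R L \<longleftrightarrow> (\<forall>a\<in>A.
     (L a = lab_in \<longleftrightarrow> (\<forall>b\<in>attackers R a. L b = lab_out)) \<and>
     (L a = lab_out \<longleftrightarrow> (\<exists>b\<in>attackers R a. L b = lab_in)))"
  unfolding complete_labelling_def label_undec_iff by auto

lemma complete_labelling_cong:
  assumes "R \<subseteq> A \<times> A" and "\<And>a. a \<in> A \<Longrightarrow> L a = L' a" and "complete_labelling A R L"
  shows "complete_labelling A R L'"
proof -
  have "attackers R a \<subseteq> A" for a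
    using assms(1) unfolding attackers_def by blast
  then show ?thesis
    using assms(2,3) unfolding complete_labelling_iff_in_out by (metis subsetD)
qed

lemma complete_labelling_in_admissible:
  assumes RA: "R \<subseteq> A \<times> A" and cl: "complete_labelling A R L"
  shows "admissible A R {a \<in> A. L a = lab_in}"
proof -
  let ?S = "{a \<in> A. L a = lab_in}"
  have att: "attackers R a \<subseteq> A" for a
    using RA unfolding attackers_def by blast
  have in_iff: "L a = lab_in \<longleftrightarrow> (\<forall>b\<in>attackers R a. L b = lab_out)"
    and out_iff: "L a = lab_out \<longleftrightarrow> (\<exists>b\<in>attackers R a. L b = lab_in)" if "a \<in> A" for a
    using cl that unfolding complete_labelling_iff_in_out by auto
  have "conflict_free R ?S"
    unfolding conflict_free_def using in_iff by (fastforce simp: attackers_def)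
  moreover have "acceptable R a ?S" if "a \<in> ?S" for a
    unfolding acceptable_def
  proof
    fix b assume b: "b \<in> attackers R a"
    then have "L b = lab_out"
      using that in_iff by blast
    then obtain c where "c \<in> attackers R b" and "L c = lab_in"
      using out_iff att b by blast
    then show "\<exists>c\<in>?S. (c, b) \<in> R"
      using att unfolding attackers_def by blast
  qed
  ultimately show ?thesis
    unfolding admissible_def by blast
qed

definition ext2lab :: "('a \<times> 'a) set \<Rightarrow> 'a set \<Rightarrow> 'a \<Rightarrow> label" where
  "ext2lab R S a =
     (if a \<in> S then lab_in else if \<exists>b\<in>S. (b, a) \<in> R then lab_out else lab_undec)"

lemma preferred_ext2lab_complete:
  assumes pref: "preferred A R P"
  shows "complete_labelling A R (ext2lab R P)"
  unfolding complete_labelling_iff_in_out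
proof (intro ballI conjI)
  fix a assume "a \<in> A"
  have cf: "conflict_free R P" and acc_P: "\<forall>x\<in>P. acceptable R x P"
    using pref unfolding preferred_def admissible_def by auto
  have all_out_iff_acceptable: "(\<forall>b\<in>attackers R a. ext2lab R P b = lab_out) \<longleftrightarrow> acceptable R a P"
    using cf unfolding acceptable_def attackers_def conflict_free_def ext2lab_def by auto
  show "ext2lab R P a = lab_in \<longleftrightarrow> (\<forall>b\<in>attackers R a. ext2lab R P b = lab_out)"
    unfolding all_out_iff_acceptable
    using acc_P preferred_acceptable_mem[OF pref \<open>a \<in> A\<close>] by (auto simp: ext2lab_def)
  show "ext2lab R P a = lab_out \<longleftrightarrow> (\<exists>b\<in>attackers R a. ext2lab R P b = lab_in)"
    using cf unfolding conflict_free_def attackers_def ext2lab_def by auto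
qed

lemma sat_Un [simp]: "sat \<nu> (F \<union> G) \<longleftrightarrow> sat \<nu> F \<and> sat \<nu> G"
  unfolding sat_def by blast

lemma sat_unit_clauses: "sat \<nu> {{f a} | a. a \<in> S} \<longleftrightarrow> (\<forall>a\<in>S. lit_true \<nu> (f a))"
  unfolding sat_def by blast

lemma sat_singleton: "sat \<nu> {C} \<longleftrightarrow> (\<exists>l\<in>C. lit_true \<nu> l)"
  unfolding sat_def by blast

lemma sat_inner_add_iff:
  "sat \<nu> (inner_add A \<phi> k S) \<longleftrightarrow>
     (\<forall>a\<in>S. \<nu> (VI (idx \<phi> k a))) \<and> (\<exists>a\<in>A - S. \<nu> (VI (idx \<phi> k a)))"
  unfolding inner_add_def sat_Un sat_unit_clauses sat_singleton by auto

lemma sat_outer_add_iff: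
  "sat \<nu> (outer_add A \<phi> k S) \<longleftrightarrow> (\<exists>a\<in>A - S. \<nu> (VI (idx \<phi> k a)))"
  unfolding outer_add_def sat_singleton by auto

lemma SS_output_exists: "\<exists>r. SS_output f r"
  unfolding SS_output_def by (metis option.distinct(1) option.inject)

lemma SS_output_Some: "SS_output f (Some \<nu>) \<Longrightarrow> sat \<nu> f"
  unfolding SS_output_def by auto

lemma SS_output_None: "SS_output f None \<Longrightarrow> \<not> sat \<nu> f"
  unfolding SS_output_def by auto

definition lab_assignment :: "(nat \<Rightarrow> 'a) \<Rightarrow> ('a \<Rightarrow> label) \<Rightarrow> assignment" where
  "lab_assignment \<phi> L v = (case v of
     VI i \<Rightarrow> L (\<phi> i) = lab_in | VO i \<Rightarrow> L (\<phi> i) = lab_out | VU i \<Rightarrow> L (\<phi> i) = lab_undec)"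

lemma lab_of_lab_assignment [simp]: "lab_of (lab_assignment \<phi> L) i = L (\<phi> i)"
  by (cases "L (\<phi> i)") (simp_all add: lab_of_def lab_assignment_def)

lemma no_infinite_run_if_decreasing:
  assumes "wf r" and step: "\<And>s t. step s t \<Longrightarrow> P s \<Longrightarrow> P t \<and> (t, s) \<in> r" and "P s\<^sub>0"
  shows "\<nexists>f. f 0 = s\<^sub>0 \<and> (\<forall>n. step (f n) (f (Suc n)))"
proof
  assume "\<exists>f. f 0 = s\<^sub>0 \<and> (\<forall>n. step (f n) (f (Suc n)))"
  then obtain f where "f 0 = s\<^sub>0" and run: "\<And>n. step (f n) (f (Suc n))"
    by blast
  have "P (f n)" for n
    by (induction n) (use \<open>f 0 = s\<^sub>0\<close> \<open>P s\<^sub>0\<close> step run in auto)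
  then have "\<forall>n. (f (Suc n), f n) \<in> r"
    using step run by blast
  then show False
    using \<open>wf r\<close> by (auto simp: wf_iff_no_infinite_down_chain)
qed

lemma pref_step_terminal_Done:
  assumes "\<nexists>t. pref_step A \<phi> k s t"
  shows "\<exists>E. s = Done E"
proof (cases s)
  case (Outer cnf Ep)
  then show ?thesis
    using assms pref_step.outer by blast
next
  case (Inner cnf Ep cnfdf pc)
  obtain r where "SS_output cnfdf r"
    using SS_output_exists by blast
  then show ?thesis
    using assms unfolding Inner
    by (cases r; cases "INARGS \<phi> k (the r) = A") (auto intro: pref_step.intros)
next
  case (After cnf Ep pc)
  then show ?thesis
    using assms by (cases pc) (auto intro: pref_step.intros)
qed simp

section \<open>Candidates: the in-sets of the models of \<open>\<Pi>\<close>\<close>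

locale af_encoding =
  fixes A :: "'a set" and R :: "('a \<times> 'a) set" and k :: nat
    and \<phi> :: "nat \<Rightarrow> 'a" and \<Pi> :: cnf
  assumes attacks_within: "R \<subseteq> A \<times> A"
    and bij_\<phi>: "bij_betw \<phi> {1..k} A"
    and sat_\<Pi>_iff: "\<And>\<nu>. sat \<nu> \<Pi> \<longleftrightarrow> encodes_complete_nonempty A R \<phi> k \<nu>"
begin

abbreviation inargs :: "assignment \<Rightarrow> 'a set" where
  "inargs \<nu> \<equiv> INARGS \<phi> k \<nu>"

lemma finite_A: "finite A"
  using bij_betw_finite bij_\<phi> by blast

lemma idx_mem: "a \<in> A \<Longrightarrow> idx \<phi> k a \<in> {1..k}"
  unfolding idx_def using bij_\<phi> by (metis bij_betw_def inv_into_into)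

lemma \<phi>_idx: "a \<in> A \<Longrightarrow> \<phi> (idx \<phi> k a) = a"
  unfolding idx_def using bij_\<phi> by (metis bij_betw_def f_inv_into_f)

lemma idx_\<phi>: "i \<in> {1..k} \<Longrightarrow> idx \<phi> k (\<phi> i) = i"
  unfolding idx_def using bij_\<phi> by (metis bij_betw_def inv_into_f_f)

lemma inargs_subset: "inargs \<nu> \<subseteq> A"
  unfolding INARGS_def using bij_\<phi> by (auto dest: bij_betwE)

lemma mem_inargs_iff:
  assumes "a \<in> A"
  shows "a \<in> inargs \<nu> \<longleftrightarrow> \<nu> (VI (idx \<phi> k a))"
proof
  assume "a \<in> inargs \<nu>"
  then obtain i where "i \<in> {1..k}" and "\<nu> (VI i)" and "a = \<phi> i"
    unfolding INARGS_def by blast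
  then show "\<nu> (VI (idx \<phi> k a))"
    using idx_\<phi> by simp
next
  assume "\<nu> (VI (idx \<phi> k a))"
  moreover have "a = \<phi> (idx \<phi> k a)" and "idx \<phi> k a \<in> {1..k}"
    using assms \<phi>_idx idx_mem by auto
  ultimately show "a \<in> inargs \<nu>"
    unfolding INARGS_def by blast
qed

lemma inargs_eq_lab_in: "inargs \<nu> = {a \<in> A. lab_of \<nu> (idx \<phi> k a) = lab_in}"
  using inargs_subset[of \<nu>] mem_inargs_iff[of _ \<nu>] unfolding lab_of_def by auto

lemma inargs_lab_assignment: "inargs (lab_assignment \<phi> L) = {a \<in> A. L a = lab_in}"
  unfolding inargs_eq_lab_in by (auto simp: \<phi>_idx)

lemma sat_outer_add: "sat \<nu> (outer_add A \<phi> k S) \<longleftrightarrow> \<not> inargs \<nu> \<subseteq> S"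
  using inargs_subset[of \<nu>] mem_inargs_iff[of _ \<nu>] unfolding sat_outer_add_iff by auto

lemma sat_inner_add: "S \<subseteq> A \<Longrightarrow> sat \<nu> (inner_add A \<phi> k S) \<longleftrightarrow> S \<subset> inargs \<nu>"
  using inargs_subset[of \<nu>] mem_inargs_iff[of _ \<nu>] unfolding sat_inner_add_iff by auto

lemma encodes_lab_assignment:
  assumes "complete_labelling A R L" and "\<exists>a\<in>A. L a = lab_in"
  shows "encodes_complete_nonempty A R \<phi> k (lab_assignment \<phi> L)"
  unfolding encodes_complete_nonempty_def
proof (intro conjI)
  show "complete_labelling A R (\<lambda>a. lab_of (lab_assignment \<phi> L) (idx \<phi> k a))"
    using complete_labelling_cong[OF attacks_within _ assms(1)] by (simp add: \<phi>_idx)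
  show "\<exists>a\<in>A. lab_of (lab_assignment \<phi> L) (idx \<phi> k a) = lab_in"
    using assms(2) by (simp add: \<phi>_idx)
qed (auto simp: lab_assignment_def label_undec_iff)

definition candidates :: "'a set set" where
  "candidates = {inargs \<nu> | \<nu>. sat \<nu> \<Pi>}"

definition maximal_candidates :: "'a set set" where
  "maximal_candidates = {X \<in> candidates. \<forall>Y\<in>candidates. X \<subseteq> Y \<longrightarrow> Y = X}"

lemma candidate_admissible:
  assumes "X \<in> candidates"
  shows "admissible A R X" and "X \<noteq> {}"
proof -
  obtain \<nu> where X: "X = inargs \<nu>" and "sat \<nu> \<Pi>"
    using assms unfolding candidates_def by blast
  then have enc: "encodes_complete_nonempty A R \<phi> k \<nu>"
    using sat_\<Pi>_iff by blast
  then show "admissible A R X"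
    unfolding X inargs_eq_lab_in encodes_complete_nonempty_def
    using complete_labelling_in_admissible[OF attacks_within] by blast
  show "X \<noteq> {}"
    using enc unfolding X inargs_eq_lab_in encodes_complete_nonempty_def by blast
qed

lemma preferred_candidate:
  assumes pref: "preferred A R P" and "P \<noteq> {}"
  shows "P \<in> candidates"
proof -
  let ?\<nu> = "lab_assignment \<phi> (ext2lab R P)"
  have "P \<subseteq> A"
    using pref unfolding preferred_def admissible_def by blast
  then have in_iff: "{a \<in> A. ext2lab R P a = lab_in} = P"
    by (auto simp: ext2lab_def)
  then have "sat ?\<nu> \<Pi>"
    using encodes_lab_assignment[OF preferred_ext2lab_complete[OF pref]] \<open>P \<noteq> {}\<close> sat_\<Pi>_iff
    by blast
  moreover have "inargs ?\<nu> = P"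
    using in_iff inargs_lab_assignment by simp
  ultimately show ?thesis
    unfolding candidates_def by blast
qed

lemma maximal_candidate_preferred:
  assumes "S \<in> maximal_candidates"
  shows "preferred A R S"
  unfolding preferred_def
proof (intro conjI allI impI)
  have S: "S \<in> candidates" and max: "\<forall>Y\<in>candidates. S \<subseteq> Y \<longrightarrow> Y = S"
    using assms unfolding maximal_candidates_def by auto
  show "admissible A R S"
    using candidate_admissible(1)[OF S] .
  fix T assume T: "admissible A R T \<and> S \<subseteq> T"
  then obtain P where P: "preferred A R P" "T \<subseteq> P"
    using admissible_subset_preferred[OF finite_A] by blast
  then have "P \<in> candidates"
    using preferred_candidate candidate_admissible(2)[OF S] T by blast
  then show "T = S"
    using max P T by blast
qed

lemma preferred_maximal_candidate:
  assumes "preferred A R S" and "S \<noteq> {}"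
  shows "S \<in> maximal_candidates"
  using assms preferred_candidate candidate_admissible(1)
  unfolding maximal_candidates_def preferred_def by blast

lemma preferred_empty_iff: "preferred A R {} \<longleftrightarrow> maximal_candidates = {}"
proof
  assume pref: "preferred A R {}"
  show "maximal_candidates = {}"
  proof (rule ccontr)
    assume "maximal_candidates \<noteq> {}"
    then obtain M where "M \<in> candidates"
      unfolding maximal_candidates_def by blast
    then show False
      using pref candidate_admissible[of M] unfolding preferred_def by blast
  qed
next
  assume none: "maximal_candidates = {}"
  have "T = {}" if adm: "admissible A R T" for T
  proof -
    obtain P where "preferred A R P" and "T \<subseteq> P"
      using admissible_subset_preferred[OF finite_A adm] by blast
    then show ?thesis
      using preferred_maximal_candidate none by blast
  qed
  then show "preferred A R {}"
    unfolding preferred_def using admissible_empty by blast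
qed

theorem preferred_eq_maximal_candidates:
  "{S. preferred A R S} = (if maximal_candidates = {} then {{}} else maximal_candidates)"
proof (cases "maximal_candidates = {}")
  case True
  then have "preferred A R S \<longleftrightarrow> S = {}" for S
    using preferred_empty_iff preferred_maximal_candidate by blast
  then show ?thesis
    using True by auto
next
  case False
  then have "preferred A R S \<longleftrightarrow> S \<in> maximal_candidates" for S
    using preferred_empty_iff preferred_maximal_candidate maximal_candidate_preferred by blast
  then show ?thesis
    using False by auto
qed

section \<open>Invariant and termination measure\<close>

definition found_inv :: "cnf \<Rightarrow> 'a set set \<Rightarrow> bool" where
  "found_inv cnf Ep \<longleftrightarrow> Ep \<subseteq> maximal_candidates \<and>
     (\<forall>\<nu>. sat \<nu> cnf \<longleftrightarrow> sat \<nu> \<Pi> \<and> (\<forall>E\<in>Ep. \<not> inargs \<nu> \<subseteq> E))"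

fun pstate_inv :: "'a pstate \<Rightarrow> bool" where
  "pstate_inv (Outer cnf Ep) \<longleftrightarrow> found_inv cnf Ep"
| "pstate_inv (Inner cnf Ep cnfdf pc) \<longleftrightarrow> found_inv cnf Ep \<and> (\<forall>p. pc = Some p \<longrightarrow> sat p cnf) \<and>
     (\<forall>\<nu>. sat \<nu> cnfdf \<longleftrightarrow> sat \<nu> cnf \<and> (\<forall>p. pc = Some p \<longrightarrow> inargs p \<subset> inargs \<nu>))"
| "pstate_inv (After cnf Ep pc) \<longleftrightarrow> found_inv cnf Ep \<and> (case pc of
     None \<Rightarrow> \<forall>\<nu>. \<not> sat \<nu> cnf
   | Some p \<Rightarrow> sat p cnf \<and> (\<forall>\<nu>. sat \<nu> cnf \<longrightarrow> \<not> inargs p \<subset> inargs \<nu>))"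
| "pstate_inv (Done E) \<longleftrightarrow> E = {S. preferred A R S}"

text \<open>Each outer iteration finds a new maximal candidate, and each successful call of SS in
  the inner loop strictly enlarges the in-set of the current candidate.\<close>
fun outer_rank :: "'a pstate \<Rightarrow> nat" where
  "outer_rank (Outer _ Ep) = Suc (card (maximal_candidates - Ep))"
| "outer_rank (Inner _ Ep _ _) = Suc (card (maximal_candidates - Ep))"
| "outer_rank (After _ Ep _) = Suc (card (maximal_candidates - Ep))"
| "outer_rank (Done _) = 0"

fun inner_rank :: "'a pstate \<Rightarrow> nat" where
  "inner_rank (Outer _ _) = card A + 3"
| "inner_rank (Inner _ _ _ None) = card A + 2"
| "inner_rank (Inner _ _ _ (Some p)) = Suc (card A - card (inargs p))"
| "inner_rank (After _ _ _) = 0"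
| "inner_rank (Done _) = 0"

lemma finite_maximal_candidates: "finite maximal_candidates"
proof -
  have "maximal_candidates \<subseteq> Pow A"
    using inargs_subset unfolding maximal_candidates_def candidates_def by blast
  then show ?thesis
    using finite_A finite_subset by blast
qed

lemma card_inargs_le: "card (inargs \<nu>) \<le> card A"
  by (rule card_mono[OF finite_A inargs_subset])

lemma card_inargs_less: "inargs p \<subset> inargs \<nu> \<Longrightarrow> card (inargs p) < card (inargs \<nu>)"
  by (rule psubset_card_mono[OF finite_subset[OF inargs_subset finite_A]])

lemma found_inv_extend:
  assumes inv: "found_inv cnf Ep" and "sat p cnf"
    and max: "\<forall>\<nu>. sat \<nu> cnf \<longrightarrow> \<not> inargs p \<subset> inargs \<nu>"
  shows "inargs p \<in> maximal_candidates - Ep"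
    and "found_inv (cnf \<union> outer_add A \<phi> k (inargs p)) (Ep \<union> {inargs p})"
proof -
  have found: "Ep \<subseteq> maximal_candidates"
    and sat_cnf: "\<And>\<nu>. sat \<nu> cnf \<longleftrightarrow> sat \<nu> \<Pi> \<and> (\<forall>E\<in>Ep. \<not> inargs \<nu> \<subseteq> E)"
    using inv unfolding found_inv_def by auto
  have "sat p \<Pi>" and new: "\<forall>E\<in>Ep. \<not> inargs p \<subseteq> E"
    using sat_cnf[of p] \<open>sat p cnf\<close> by auto
  then have "inargs p \<in> candidates"
    unfolding candidates_def by blast
  moreover have "Y = inargs p" if "Y \<in> candidates" and "inargs p \<subseteq> Y" for Y
  proof -
    obtain \<mu> where Y: "Y = inargs \<mu>" and "sat \<mu> \<Pi>"
      using \<open>Y \<in> candidates\<close> unfolding candidates_def by blast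
    have "\<forall>E\<in>Ep. \<not> inargs \<mu> \<subseteq> E"
      using new that(2) Y by blast
    then have "sat \<mu> cnf"
      using sat_cnf[of \<mu>] \<open>sat \<mu> \<Pi>\<close> by blast
    then show ?thesis
      using max that(2) Y by blast
  qed
  ultimately show new_max: "inargs p \<in> maximal_candidates - Ep"
    using new unfolding maximal_candidates_def by blast
  show "found_inv (cnf \<union> outer_add A \<phi> k (inargs p)) (Ep \<union> {inargs p})"
    unfolding found_inv_def sat_Un sat_outer_add using found sat_cnf new_max by auto
qed

lemma found_inv_unsat:
  assumes inv: "found_inv cnf Ep" and unsat: "\<forall>\<nu>. \<not> sat \<nu> cnf"
  shows "Ep = maximal_candidates"
proof
  show found: "Ep \<subseteq> maximal_candidates"
    using inv unfolding found_inv_def by blast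
  show "maximal_candidates \<subseteq> Ep"
  proof
    fix M assume M: "M \<in> maximal_candidates"
    then obtain \<nu> where "M = inargs \<nu>" and "sat \<nu> \<Pi>"
      unfolding maximal_candidates_def candidates_def by blast
    then obtain E where "E \<in> Ep" and "M \<subseteq> E"
      using inv unsat unfolding found_inv_def by blast
    then show "M \<in> Ep"
      using M found unfolding maximal_candidates_def by blast
  qed
qed

lemma pstate_inv_call_cont:
  assumes inv: "pstate_inv (Inner cnf Ep cnfdf pc)" and "sat \<nu> cnfdf"
  shows "pstate_inv (Inner cnf Ep (cnfdf \<union> inner_add A \<phi> k (inargs \<nu>)) (Some \<nu>))"
    and "inner_rank (Inner cnf Ep cnfdf pc) > Suc (card A - card (inargs \<nu>))"
proof -
  have cnfdf_iff: "\<And>\<mu>. sat \<mu> cnfdf \<longleftrightarrow> sat \<mu> cnf \<and> (\<forall>p. pc = Some p \<longrightarrow> inargs p \<subset> inargs \<mu>)"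
    using inv by simp
  then have above: "\<forall>p. pc = Some p \<longrightarrow> inargs p \<subset> inargs \<nu>" and "sat \<nu> cnf"
    using \<open>sat \<nu> cnfdf\<close> by auto
  have "sat \<mu> (cnfdf \<union> inner_add A \<phi> k (inargs \<nu>)) \<longleftrightarrow> sat \<mu> cnf \<and> inargs \<nu> \<subset> inargs \<mu>" for \<mu>
    unfolding sat_Un sat_inner_add[OF inargs_subset] cnfdf_iff using above psubset_trans by blast
  then show "pstate_inv (Inner cnf Ep (cnfdf \<union> inner_add A \<phi> k (inargs \<nu>)) (Some \<nu>))"
    using inv \<open>sat \<nu> cnf\<close> by simp
  show "inner_rank (Inner cnf Ep cnfdf pc) > Suc (card A - card (inargs \<nu>))"
  proof (cases pc)
    case (Some p)
    then have "card (inargs p) < card (inargs \<nu>)"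
      using above card_inargs_less by blast
    then show ?thesis
      using Some card_inargs_le[of \<nu>] by simp
  qed simp
qed

lemma pref_step_preserves_inv:
  assumes "pref_step A \<phi> k s t" and inv: "pstate_inv s"
  shows "pstate_inv t \<and> (t, s) \<in> measures [outer_rank, inner_rank]"
  using assms(1)
proof cases
  case (outer cnf Ep)
  then show ?thesis
    using inv by simp
next
  case (call_cont cnfdf \<nu> cnf Ep pc)
  have "sat \<nu> cnfdf"
    using call_cont(3) SS_output_Some by blast
  then show ?thesis
    using pstate_inv_call_cont[of cnf Ep cnfdf pc \<nu>] inv unfolding call_cont(1,2) by simp
next
  case (call_all cnfdf \<nu> cnf Ep pc)
  have "sat \<nu> cnf"
    using inv SS_output_Some[OF call_all(3)] unfolding call_all(1) by simp
  moreover have "\<not> inargs \<nu> \<subset> inargs \<mu>" for \<mu>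
    using call_all(4) inargs_subset[of \<mu>] by blast
  ultimately show ?thesis
    using inv unfolding call_all(1,2) by (cases pc) simp_all
next
  case (call_eps cnfdf cnf Ep pc)
  have "\<not> sat \<mu> cnfdf" for \<mu>
    using SS_output_None[OF call_eps(3)] .
  then show ?thesis
    using inv unfolding call_eps(1,2) by (cases pc) simp_all
next
  case (after_some cnf Ep p)
  have "found_inv cnf Ep" and "sat p cnf" and "\<forall>\<nu>. sat \<nu> cnf \<longrightarrow> \<not> inargs p \<subset> inargs \<nu>"
    using inv unfolding after_some(1) by simp_all
  note new = found_inv_extend[OF this]
  have "maximal_candidates - (Ep \<union> {inargs p}) \<subset> maximal_candidates - Ep"
    using new(1) by blast
  then have "card (maximal_candidates - (Ep \<union> {inargs p})) < card (maximal_candidates - Ep)"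
    using finite_maximal_candidates by (meson finite_Diff psubset_card_mono)
  then show ?thesis
    using new(2) unfolding after_some(1,2) in_measures outer_rank.simps pstate_inv.simps Suc_less_eq
    by blast
next
  case (after_none cnf Ep)
  have "found_inv cnf Ep" and "\<forall>\<nu>. \<not> sat \<nu> cnf"
    using inv unfolding after_none(1) by simp_all
  then have "Ep = maximal_candidates"
    by (rule found_inv_unsat)
  then show ?thesis
    using preferred_eq_maximal_candidates unfolding after_none(1,2) by simp
qed

theorem prefsat_terminates: "\<nexists>f. f 0 = Outer \<Pi> {} \<and> (\<forall>n. pref_step A \<phi> k (f n) (f (Suc n)))"
proof (rule no_infinite_run_if_decreasing[OF wf_measures])
  show "pstate_inv (Outer \<Pi> {})"
    by (simp add: found_inv_def)
qed (rule pref_step_preserves_inv)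

theorem prefsat_result:
  assumes "(pref_step A \<phi> k)\<^sup>*\<^sup>* (Outer \<Pi> {}) s" and "\<nexists>t. pref_step A \<phi> k s t"
  shows "s = Done {S. preferred A R S}"
proof -
  have "pstate_inv s"
    using assms(1)
  proof (induction rule: rtranclp_induct)
    case base
    then show ?case
      by (simp add: found_inv_def)
  next
    case (step s t)
    then show ?case
      using pref_step_preserves_inv by blast
  qed
  then show ?thesis
    using pref_step_terminal_Done[OF assms(2)] by auto
qed

end

theorem theorem1:
  fixes A :: "'a set" and R :: "('a \<times> 'a) set" and k :: nat
    and \<phi> :: "nat \<Rightarrow> 'a" and \<Pi> :: cnf
  assumes "finite A" and "R \<subseteq> A \<times> A" and "card A = k"
    and "bij_betw \<phi> {1..k} A"
    and "is_cnf_over (VARS k) \<Pi>"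
    and "\<forall>\<nu>. sat \<nu> \<Pi> \<longleftrightarrow> encodes_complete_nonempty A R \<phi> k \<nu>"
  shows "\<not> (\<exists>f. f 0 = Outer \<Pi> {} \<and> (\<forall>n. pref_step A \<phi> k (f n) (f (Suc n))))
     \<and> (\<forall>s. (pref_step A \<phi> k)\<^sup>*\<^sup>* (Outer \<Pi> {}) s \<and> (\<nexists>t. pref_step A \<phi> k s t) \<longrightarrow>
            s = Done {S. preferred A R S})"
proof -
  \<comment> \<open>Finiteness of A follows from the bijection.\<close>
  interpret af_encoding A R k \<phi> \<Pi>
    using assms(2,4,6) by unfold_locales auto
  show ?thesis
    using prefsat_terminates prefsat_result by blast
qed

end
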